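(* Let $\mathsf{X}$ be a complex random variable with $\mathbb{E}[|\mathsf{X}|^2]=1$, let $L\ge1$, and let $x_1,\dots,x_L$ be i.i.d. copies of $\mathsf{X}$. Assume there is a constant $\delta>0$ with $|x_\ell|^2\ge\delta$ almost surely for all $\ell$. Let $P>0$, $\sigma_{\mathrm s}^2>0$, and define the average conditional CRB $$\overline{\mathrm{CRB}}_{h_{\mathrm s}}=\frac{\sigma_{\mathrm s}^2}{P}\,\mathbb{E}\!\left[\frac{1}{\sum_{\ell=1}^L|x_\ell|^2}\right].$$ Then $$\overline{\mathrm{CRB}}_{h_{\mathrm s}}\le\frac{\sigma_{\mathrm s}^2}{P}\left[\frac1L+\frac{\mathrm{Var}(|\mathsf{X}|^2)}{L^2\delta}\right].$$
   Context: In the sensing model $\boldsymbol y_{\mathrm s}=\sqrt{P}h_{\mathrm s}\boldsymbol x+\boldsymbol z_{\mathrm s}$ with noise $\mathcal{CN}(\boldsymbol 0,\sigma_{\mathrm s}^2\boldsymbol I_L)$, the conditional CRB for estimating $h_{\mathrm s}$ given $\boldsymbol x=(x_1,\dots,x_L)$ is $\sigma_{\mathrm s}^2/(P\|\boldsymbol x\|^2)$, and the average conditional CRB is its expectation over $\boldsymbol x$, as defined in the claim. The symbols are normalized so that $\mathbb{E}[|\mathsf{X}|^2]=1$. *)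

theory Defs
  imports "HOL-Probability.Probability"
begin

definition (in prob_space) avg_CRB :: "real \<Rightarrow> real \<Rightarrow> nat \<Rightarrow> (nat \<Rightarrow> 'a \<Rightarrow> complex) \<Rightarrow> real" where
  "avg_CRB sigma2 P L x = sigma2 / P * expectation (\<lambda>\<omega>. 1 / (\<Sum>l<L. (cmod (x l \<omega>))\<^sup>2))"

end

theory Submission
  imports Defs
begin

text \<open>With \<open>S = (\<Sum>l<L. |x\<^sub>l|\<^sup>2)\<close> and \<open>m = E S = L\<close>, the exact expansion
  \<open>1/S = 1/m - (S - m)/m\<^sup>2 + (S - m)\<^sup>2/(m\<^sup>2 S)\<close> together with \<open>S \<ge> L\<delta>\<close> bounds \<open>1/S\<close> by a
  quadratic polynomial in \<open>S\<close>. Taking expectations, the linear term vanishes and the quadratic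
  one contributes \<open>Var S / (L\<^sup>2 \<cdot> L\<delta>)\<close>, where \<open>Var S = L Var |X|\<^sup>2\<close> by independence.\<close>

lemma inverse_le_second_order_bound:
  fixes s m c :: real
  assumes "m > 0" "c > 0" "c \<le> s"
  shows "1 / s \<le> 1 / m - (s - m) / m\<^sup>2 + (s - m)\<^sup>2 / (m\<^sup>2 * c)"
proof -
  have "s > 0" using assms by linarith
  then have "1 / s = 1 / m - (s - m) / m\<^sup>2 + (s - m)\<^sup>2 / (m\<^sup>2 * s)"
    using \<open>m > 0\<close> by (simp add: field_simps power2_eq_square)
  also have "(s - m)\<^sup>2 / (m\<^sup>2 * s) \<le> (s - m)\<^sup>2 / (m\<^sup>2 * c)"
    using assms by (intro divide_left_mono mult_left_mono) auto
  finally show ?thesis by simp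
qed

context prob_space
begin

lemma integrable_eq_of_distr_eq:
  fixes f :: "'b \<Rightarrow> 'c::{banach, second_countable_topology}"
  assumes "random_variable N X" "random_variable N Y" "distr M N X = distr M N Y"
    and "f \<in> borel_measurable N"
  shows "integrable M (\<lambda>\<omega>. f (X \<omega>)) \<longleftrightarrow> integrable M (\<lambda>\<omega>. f (Y \<omega>))"
  using assms by (simp add: integrable_distr_eq[symmetric])

lemma expectation_eq_of_distr_eq:
  fixes f :: "'b \<Rightarrow> 'c::{banach, second_countable_topology}"
  assumes "random_variable N X" "random_variable N Y" "distr M N X = distr M N Y"
    and "f \<in> borel_measurable N"
  shows "expectation (\<lambda>\<omega>. f (X \<omega>)) = expectation (\<lambda>\<omega>. f (Y \<omega>))"
  using assms by (simp add: integral_distr[symmetric])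

lemma expectation_inverse_le:
  fixes S :: "'a \<Rightarrow> real"
  assumes S: "integrable M S" "integrable M (\<lambda>\<omega>. (S \<omega>)\<^sup>2)"
    and "c > 0" and S_ge: "AE \<omega> in M. c \<le> S \<omega>"
  shows "expectation (\<lambda>\<omega>. 1 / S \<omega>) \<le> 1 / expectation S + variance S / ((expectation S)\<^sup>2 * c)"
proof -
  define m where "m = expectation S"
  define g where "g \<omega> = 1 / m - (S \<omega> - m) / m\<^sup>2 + (S \<omega> - m)\<^sup>2 / (m\<^sup>2 * c)" for \<omega>
  have "c \<le> m"
    unfolding m_def using integral_mono_AE[OF _ S(1) S_ge] prob_space by simp
  with \<open>c > 0\<close> have "m > 0" by linarith
  have g_ge: "AE \<omega> in M. 1 / S \<omega> \<le> g \<omega>"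
    using S_ge by eventually_elim (use inverse_le_second_order_bound \<open>m > 0\<close> \<open>c > 0\<close> g_def in auto)
  moreover have "AE \<omega> in M. 0 \<le> g \<omega>"
    using S_ge g_ge by eventually_elim (use \<open>c > 0\<close> in \<open>auto intro: order_trans[rotated]\<close>)
  moreover have sq: "integrable M (\<lambda>\<omega>. (S \<omega> - m)\<^sup>2)"
    using S by (simp add: power2_diff)
  then have "integrable M g"
    unfolding g_def using S by simp
  ultimately have "expectation (\<lambda>\<omega>. 1 / S \<omega>) \<le> expectation g"
    by (rule integral_mono_AE'[rotated])
  also have "expectation g = 1 / m + variance S / (m\<^sup>2 * c)"
    unfolding g_def m_def using S sq[unfolded m_def] by (simp add: prob_space)
  finally show ?thesis unfolding m_def .
qed

lemma indep_vars_expectation_mult: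
  fixes Y :: "'i \<Rightarrow> 'a \<Rightarrow> real"
  assumes "indep_vars (\<lambda>_. borel) Y I" "i \<in> I" "j \<in> I" "i \<noteq> j"
    and "integrable M (Y i)" "integrable M (Y j)"
  shows indep_vars_integrable_mult: "integrable M (\<lambda>\<omega>. Y i \<omega> * Y j \<omega>)"
    and "expectation (\<lambda>\<omega>. Y i \<omega> * Y j \<omega>) = expectation (Y i) * expectation (Y j)"
proof -
  have ind: "indep_vars (\<lambda>_. borel) Y {i, j}"
    using assms(1) by (rule indep_vars_subset) (use assms(2,3) in auto)
  have int: "\<And>k. k \<in> {i, j} \<Longrightarrow> integrable M (Y k)"
    using assms(5,6) by auto
  show "integrable M (\<lambda>\<omega>. Y i \<omega> * Y j \<omega>)"
    using indep_vars_integrable[OF _ ind int] assms(4) by simp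
  show "expectation (\<lambda>\<omega>. Y i \<omega> * Y j \<omega>) = expectation (Y i) * expectation (Y j)"
    using indep_vars_lebesgue_integral[OF _ ind int] assms(4) by simp
qed

lemma
  fixes Y :: "'i \<Rightarrow> 'a \<Rightarrow> real"
  assumes "finite I" "indep_vars (\<lambda>_. borel) Y I"
    and int: "\<And>i. i \<in> I \<Longrightarrow> integrable M (Y i)"
    and int_sq: "\<And>i. i \<in> I \<Longrightarrow> integrable M (\<lambda>\<omega>. (Y i \<omega>)\<^sup>2)"
  shows indep_vars_integrable_sum_square: "integrable M (\<lambda>\<omega>. (\<Sum>i\<in>I. Y i \<omega>)\<^sup>2)"
    and variance_sum_indep: "variance (\<lambda>\<omega>. \<Sum>i\<in>I. Y i \<omega>) = (\<Sum>i\<in>I. variance (Y i))"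
proof -
  have sum_sq: "(\<Sum>i\<in>I. Y i \<omega>)\<^sup>2 = (\<Sum>i\<in>I. \<Sum>j\<in>I. Y i \<omega> * Y j \<omega>)" for \<omega>
    unfolding power2_eq_square by (rule sum_product)
  have int_mult: "integrable M (\<lambda>\<omega>. Y i \<omega> * Y j \<omega>)" if "i \<in> I" "j \<in> I" for i j
    using int_sq[OF that(1)] indep_vars_integrable_mult[OF assms(2) that _ int int] that
    by (cases "i = j") (auto simp: power2_eq_square)
  show int_sum_sq: "integrable M (\<lambda>\<omega>. (\<Sum>i\<in>I. Y i \<omega>)\<^sup>2)"
    unfolding sum_sq using int_mult by auto
  have cov: "expectation (\<lambda>\<omega>. Y i \<omega> * Y j \<omega>)
      = expectation (Y i) * expectation (Y j) + (if i = j then variance (Y i) else 0)"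
    if "i \<in> I" "j \<in> I" for i j
    using variance_eq[OF int int_sq, OF that(1)] indep_vars_expectation_mult(2)[OF assms(2) that _ int int] that
    by (cases "i = j") (auto simp: power2_eq_square)
  have "expectation (\<lambda>\<omega>. (\<Sum>i\<in>I. Y i \<omega>)\<^sup>2)
      = (\<Sum>i\<in>I. \<Sum>j\<in>I. expectation (\<lambda>\<omega>. Y i \<omega> * Y j \<omega>))"
    unfolding sum_sq using int_mult by (simp add: Bochner_Integration.integral_sum)
  also have "\<dots> = (\<Sum>i\<in>I. expectation (Y i))\<^sup>2 + (\<Sum>i\<in>I. variance (Y i))"
    using cov by (simp add: sum.distrib power2_eq_square sum_product \<open>finite I\<close>)
  moreover have "expectation (\<lambda>\<omega>. \<Sum>i\<in>I. Y i \<omega>) = (\<Sum>i\<in>I. expectation (Y i))"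
    using int by (simp add: Bochner_Integration.integral_sum)
  ultimately show "variance (\<lambda>\<omega>. \<Sum>i\<in>I. Y i \<omega>) = (\<Sum>i\<in>I. variance (Y i))"
    using int int_sum_sq by (subst variance_eq) auto
qed

lemma expectation_inverse_sum_le:
  fixes Y :: "'i \<Rightarrow> 'a \<Rightarrow> real" and V \<delta> :: real
  assumes "finite I" "I \<noteq> {}" and indep: "indep_vars (\<lambda>_. borel) Y I"
    and int: "\<And>i. i \<in> I \<Longrightarrow> integrable M (Y i)"
    and int_sq: "\<And>i. i \<in> I \<Longrightarrow> integrable M (\<lambda>\<omega>. (Y i \<omega>)\<^sup>2)"
    and mean: "\<And>i. i \<in> I \<Longrightarrow> expectation (Y i) = 1"
    and var: "\<And>i. i \<in> I \<Longrightarrow> variance (Y i) = V"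
    and "\<delta> > 0" and Y_ge: "\<And>i. i \<in> I \<Longrightarrow> AE \<omega> in M. \<delta> \<le> Y i \<omega>"
  shows "expectation (\<lambda>\<omega>. 1 / (\<Sum>i\<in>I. Y i \<omega>)) \<le> 1 / real (card I) + V / ((real (card I))\<^sup>2 * \<delta>)"
proof -
  define n where "n = real (card I)"
  have "n > 0"
    unfolding n_def using assms(1,2) by (simp add: card_gt_0_iff)
  have "AE \<omega> in M. \<forall>i\<in>I. \<delta> \<le> Y i \<omega>"
    using Y_ge by (intro eventually_ball_finite \<open>finite I\<close>) auto
  then have sum_ge: "AE \<omega> in M. n * \<delta> \<le> (\<Sum>i\<in>I. Y i \<omega>)"
    by eventually_elim (use sum_mono[of I "\<lambda>_. \<delta>"] n_def in auto)
  have "expectation (\<lambda>\<omega>. 1 / (\<Sum>i\<in>I. Y i \<omega>))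
      \<le> 1 / expectation (\<lambda>\<omega>. \<Sum>i\<in>I. Y i \<omega>)
        + variance (\<lambda>\<omega>. \<Sum>i\<in>I. Y i \<omega>) / ((expectation (\<lambda>\<omega>. \<Sum>i\<in>I. Y i \<omega>))\<^sup>2 * (n * \<delta>))"
    using int \<open>n > 0\<close> \<open>\<delta> > 0\<close>
    by (intro expectation_inverse_le indep_vars_integrable_sum_square[OF \<open>finite I\<close> indep int int_sq]
        sum_ge) auto
  also have "\<dots> = 1 / n + n * V / (n\<^sup>2 * (n * \<delta>))"
    using variance_sum_indep[OF \<open>finite I\<close> indep int int_sq] int mean var
    by (simp add: Bochner_Integration.integral_sum n_def)
  also have "\<dots> = 1 / real (card I) + V / ((real (card I))\<^sup>2 * \<delta>)"
    using \<open>n > 0\<close> by (simp add: n_def field_simps power2_eq_square)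
  finally show ?thesis .
qed

end

theorem lemma2:
  fixes M :: "'a measure" and X :: "'a \<Rightarrow> complex" and x :: "nat \<Rightarrow> 'a \<Rightarrow> complex"
    and L :: nat and \<delta> P sigma2 :: real
  assumes "prob_space M"
    and "X \<in> borel_measurable M"
    and "integrable M (\<lambda>\<omega>. (cmod (X \<omega>))\<^sup>2)"
    and "prob_space.expectation M (\<lambda>\<omega>. (cmod (X \<omega>))\<^sup>2) = 1"
    and "integrable M (\<lambda>\<omega>. ((cmod (X \<omega>))\<^sup>2)\<^sup>2)"
    and "L \<ge> 1"
    and "prob_space.indep_vars M (\<lambda>_. borel) x {..<L}"
    and "\<And>l. l < L \<Longrightarrow> distr M borel (x l) = distr M borel X"
    and "\<delta> > 0"
    and "\<And>l. l < L \<Longrightarrow> (AE \<omega> in M. (cmod (x l \<omega>))\<^sup>2 \<ge> \<delta>)"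
    and "P > 0" and "sigma2 > 0"
  shows "prob_space.avg_CRB M sigma2 P L x
           \<le> sigma2 / P * (1 / real L
               + prob_space.variance M (\<lambda>\<omega>. (cmod (X \<omega>))\<^sup>2) / ((real L)\<^sup>2 * \<delta>))"
proof -
  interpret prob_space M by fact
  define Y where "Y l \<omega> = (cmod (x l \<omega>))\<^sup>2" for l \<omega>
  have x_rv: "random_variable borel (x l)" if "l < L" for l
    using assms(7) that unfolding indep_vars_def by auto
  have "expectation (\<lambda>\<omega>. 1 / (\<Sum>l\<in>{..<L}. Y l \<omega>)) \<le> 1 / real (card {..<L})
      + variance (\<lambda>\<omega>. (cmod (X \<omega>))\<^sup>2) / ((real (card {..<L}))\<^sup>2 * \<delta>)"
  proof (rule expectation_inverse_sum_le)
    show "indep_vars (\<lambda>_. borel) Y {..<L}"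
      unfolding Y_def by (rule indep_vars_compose2[OF assms(7)]) auto
    fix l assume "l \<in> {..<L}"
    then have "l < L" by simp
    note transfer_integrable = integrable_eq_of_distr_eq[OF x_rv[OF this] assms(2) assms(8)[OF this]]
    note transfer_expectation = expectation_eq_of_distr_eq[OF x_rv[OF \<open>l < L\<close>] assms(2) assms(8)[OF \<open>l < L\<close>]]
    show "integrable M (Y l)"
      unfolding Y_def using transfer_integrable[of "\<lambda>z. (cmod z)\<^sup>2"] assms(3) by simp
    show "integrable M (\<lambda>\<omega>. (Y l \<omega>)\<^sup>2)"
      unfolding Y_def using transfer_integrable[of "\<lambda>z. ((cmod z)\<^sup>2)\<^sup>2"] assms(5) by simp
    show mean: "expectation (Y l) = 1"
      unfolding Y_def using transfer_expectation[of "\<lambda>z. (cmod z)\<^sup>2"] assms(4) by simp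
    show "variance (Y l) = variance (\<lambda>\<omega>. (cmod (X \<omega>))\<^sup>2)"
      unfolding mean using transfer_expectation[of "\<lambda>z. ((cmod z)\<^sup>2 - 1)\<^sup>2"] assms(4)
      by (simp add: Y_def)
    show "AE \<omega> in M. \<delta> \<le> Y l \<omega>"
      unfolding Y_def using assms(10) \<open>l < L\<close> .
  qed (use assms(6,9) in \<open>auto simp: lessThan_empty_iff\<close>)
  then show ?thesis
    unfolding avg_CRB_def Y_def using assms(11,12) by (intro mult_left_mono) auto
qed

end
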